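(* For $n\ge1$, the number of permutations $\pi\in Av_n(132)$ such that every permutation $\tilde r_\pi(\pi_i)$ ($1\le i\le n$) of size greater than one contains the pattern $231$ equals the coefficient of $x^n$ in $$\frac{1-2x-\sqrt{1-4x+8x^3}}{2x}.$$
   Context: $Av_n(\sigma)$ is the set of permutations of $\{1,\dots,n\}$ avoiding the pattern $\sigma$. For a permutation $\pi=\pi_1\cdots\pi_n$ and an entry $\pi_i$, $r_\pi(\pi_i)$ is the set of entries $\pi_k$ such that $\pi_k\le\pi_i$ and all entries of $\pi$ lying (in position) between $\pi_k$ and $\pi_i$ are $\le\pi_i$ (so $\pi_i\in r_\pi(\pi_i)$); $\tilde r_\pi(\pi_i)$ is the permutation obtained by taking the entries of $r_\pi(\pi_i)$ in their order of appearance in $\pi$ and standardizing them to $1,\dots,|r_\pi(\pi_i)|$. *)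

theory Defs
  imports Complex_Main "HOL-Computational_Algebra.Formal_Power_Series"
begin

text \<open>Permutations of {1..n} are lists of length n (one-line notation, 0-indexed positions).\<close>
definition is_perm :: "nat \<Rightarrow> nat list \<Rightarrow> bool" where
  "is_perm n \<pi> \<longleftrightarrow> length \<pi> = n \<and> distinct \<pi> \<and> set \<pi> = {1..n}"

definition contains :: "nat list \<Rightarrow> nat list \<Rightarrow> bool" where
  "contains \<pi> \<sigma> \<longleftrightarrow> (\<exists>idx :: nat \<Rightarrow> nat.
      strict_mono_on {..<length \<sigma>} idx \<and>
      (\<forall>a<length \<sigma>. idx a < length \<pi>) \<and>
      (\<forall>a<length \<sigma>. \<forall>b<length \<sigma>. (\<pi> ! idx a < \<pi> ! idx b \<longleftrightarrow> \<sigma> ! a < \<sigma> ! b)))"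

definition Av :: "nat \<Rightarrow> nat list \<Rightarrow> nat list set" where
  "Av n \<sigma> = {\<pi>. is_perm n \<pi> \<and> \<not> contains \<pi> \<sigma>}"

definition r_pos :: "nat list \<Rightarrow> nat \<Rightarrow> nat set" where
  "r_pos \<pi> i = {k. k < length \<pi> \<and> \<pi> ! k \<le> \<pi> ! i \<and>
      (\<forall>j. min k i < j \<and> j < max k i \<longrightarrow> \<pi> ! j \<le> \<pi> ! i)}"

definition standardize :: "nat list \<Rightarrow> nat list" where
  "standardize xs = map (\<lambda>x. card {y \<in> set xs. y \<le> x}) xs"

definition r_tilde :: "nat list \<Rightarrow> nat \<Rightarrow> nat list" where
  "r_tilde \<pi> i = standardize (nths \<pi> (r_pos \<pi> i))"

text \<open>The generating function (1 - 2x - sqrt(1 - 4x + 8x^3)) / (2x), where the square root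
  is the formal power series square root with constant term 1.\<close>
definition gf6 :: "real fps" where
  "gf6 = (1 - 2 * fps_X - fps_radical (\<lambda>k x. root k x) 2 (1 - 4 * fps_X + 8 * fps_X ^ 3))
          / (2 * fps_X)"

end

theory Submission
  imports Defs
begin

text \<open>
  Call a permutation \<pi> good if every r_tilde \<pi> i of length greater than one contains 231,
  and let g(n) count the good 132-avoiders of length n.  Cut such a \<pi> at its maximum,
  \<pi> = \<alpha> n \<beta>.  Avoiding 132 forces every entry of \<alpha> to exceed every entry of \<beta>, so \<pi>
  is obtained by gluing a 132-avoider a of length k (shifted up by n-1-k), the entry n, and
  a 132-avoider b of length n-1-k.  The r-set of an entry of \<alpha> or \<beta> never crosses the
  maximum, while the r-set of the maximum is all of \<pi>; hence \<pi> is good iff a and b are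
  good and \<pi> itself contains 231.  A good permutation of length at least 2 contains 231
  (look at the r-set of its maximum), so for n \<ge> 3 the last condition is automatic and
  g(n) = \<Sum>k<n. g(k) g(n-1-k), while g(0) = g(1) = 1 and g(2) = 0.  For A = \<Sum> g(n) x^n this
  says x A^2 = A - 1 + 2x^2, i.e. (1 - 2xA)^2 = 1 - 4x + 8x^3, so the given series is A - 1.
\<close>


subsection \<open>Invariance under order isomorphisms\<close>

text \<open>f is strictly order preserving on A, so relabelling the entries of a list by f keeps
  every order-theoretic notion (containment, r-sets, standardization) unchanged.\<close>
definition order_iso_on :: "(nat \<Rightarrow> nat) \<Rightarrow> nat set \<Rightarrow> bool" where
  "order_iso_on f A \<longleftrightarrow> (\<forall>a\<in>A. \<forall>b\<in>A. f a < f b \<longleftrightarrow> a < b)"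

lemma order_iso_on_le:
  "order_iso_on f A \<Longrightarrow> a \<in> A \<Longrightarrow> b \<in> A \<Longrightarrow> f a \<le> f b \<longleftrightarrow> a \<le> b"
  unfolding order_iso_on_def by (meson not_le)

lemma order_iso_on_inj: "order_iso_on f A \<Longrightarrow> inj_on f A"
  unfolding order_iso_on_def inj_on_def by (metis nat_neq_iff)

lemma order_iso_on_subset: "order_iso_on f A \<Longrightarrow> B \<subseteq> A \<Longrightarrow> order_iso_on f B"
  unfolding order_iso_on_def by blast

lemma order_iso_on_shift: "order_iso_on (\<lambda>x. x + t) A"
  unfolding order_iso_on_def by auto

lemma contains_map:
  assumes "order_iso_on f (set xs)"
  shows "contains (map f xs) \<sigma> \<longleftrightarrow> contains xs \<sigma>"
proof -
  have "(\<forall>a<length \<sigma>. \<forall>b<length \<sigma>. (map f xs ! idx a < map f xs ! idx b \<longleftrightarrow> \<sigma> ! a < \<sigma> ! b))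
     \<longleftrightarrow> (\<forall>a<length \<sigma>. \<forall>b<length \<sigma>. (xs ! idx a < xs ! idx b \<longleftrightarrow> \<sigma> ! a < \<sigma> ! b))"
    if "\<forall>a<length \<sigma>. idx a < length xs" for idx
    using that assms unfolding order_iso_on_def by auto
  then show ?thesis unfolding contains_def by (auto simp del: nth_map)
qed

lemma r_pos_map:
  assumes "order_iso_on f (set xs)" "i < length xs"
  shows "r_pos (map f xs) i = r_pos xs i"
proof -
  have "\<And>j. j < length xs \<Longrightarrow> f (xs ! j) \<le> f (xs ! i) \<longleftrightarrow> xs ! j \<le> xs ! i"
    using assms by (simp add: order_iso_on_le)
  then show ?thesis unfolding r_pos_def using assms(2)
    by (auto simp: max_def min_def split: if_splits)
qed

lemma standardize_map:
  assumes "order_iso_on f (set xs)"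
  shows "standardize (map f xs) = standardize xs"
proof -
  have "card {y \<in> set (map f xs). y \<le> f x} = card {y \<in> set xs. y \<le> x}" if x: "x \<in> set xs" for x
  proof -
    have "{y \<in> set (map f xs). y \<le> f x} = f ` {y \<in> set xs. y \<le> x}"
      using assms x by (auto simp: order_iso_on_le)
    moreover have "inj_on f {y \<in> set xs. y \<le> x}"
      using order_iso_on_inj[OF assms] by (rule inj_on_subset) auto
    ultimately show ?thesis by (simp add: card_image)
  qed
  then show ?thesis unfolding standardize_def by simp
qed

lemma r_tilde_map:
  assumes "order_iso_on f (set xs)" "i < length xs"
  shows "r_tilde (map f xs) i = r_tilde xs i"
  unfolding r_tilde_def r_pos_map[OF assms] nths_map
  by (rule standardize_map, rule order_iso_on_subset[OF assms(1)], rule set_nths_subset)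

text \<open>Standardization is itself an order isomorphism onto its image.\<close>
lemma contains_standardize: "contains (standardize xs) \<sigma> \<longleftrightarrow> contains xs \<sigma>"
proof -
  define rank where "rank x = card {y \<in> set xs. y \<le> x}" for x
  have rank_less: "rank a < rank b" if "a \<in> set xs" "b \<in> set xs" "a < b" for a b
  proof -
    have "{y \<in> set xs. y \<le> a} \<subseteq> {y \<in> set xs. y \<le> b}" using that by auto
    moreover have "b \<in> {y \<in> set xs. y \<le> b} - {y \<in> set xs. y \<le> a}" using that by auto
    ultimately have "{y \<in> set xs. y \<le> a} \<subset> {y \<in> set xs. y \<le> b}" by blast
    then show ?thesis unfolding rank_def by (intro psubset_card_mono) auto
  qed
  have "order_iso_on rank (set xs)"
    unfolding order_iso_on_def by (metis rank_less nat_neq_iff order.asym)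
  moreover have "standardize xs = map rank xs" unfolding standardize_def rank_def ..
  ultimately show ?thesis by (simp add: contains_map)
qed

definition good :: "nat list \<Rightarrow> bool" where
  "good \<pi> \<longleftrightarrow> (\<forall>i<length \<pi>. length (r_tilde \<pi> i) > 1 \<longrightarrow> contains (r_tilde \<pi> i) [2, 3, 1])"

lemma good_map: "order_iso_on f (set xs) \<Longrightarrow> good (map f xs) \<longleftrightarrow> good xs"
  unfolding good_def by (simp add: r_tilde_map)


subsection \<open>Pattern containment\<close>

lemma contains_length: "contains xs \<sigma> \<Longrightarrow> length \<sigma> \<le> length xs"
proof -
  assume "contains xs \<sigma>"
  then obtain idx where sm: "strict_mono_on {..<length \<sigma>} idx"
    and lt: "\<forall>a<length \<sigma>. idx a < length xs"
    unfolding contains_def by blast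
  have "card {..<length \<sigma>} \<le> card {..<length xs}"
    by (rule card_inj_on_le[OF strict_mono_on_imp_inj_on[OF sm]]) (use lt in auto)
  then show ?thesis by simp
qed

lemma contains_append_left: "contains xs \<sigma> \<Longrightarrow> contains (xs @ ys) \<sigma>"
  unfolding contains_def by (metis (no_types, lifting) length_append nth_append trans_less_add1)

lemma contains_append_right: "contains ys \<sigma> \<Longrightarrow> contains (xs @ ys) \<sigma>"
proof -
  assume "contains ys \<sigma>"
  then obtain idx where sm: "strict_mono_on {..<length \<sigma>} idx"
    and lt: "\<forall>a<length \<sigma>. idx a < length ys"
    and c: "\<forall>a<length \<sigma>. \<forall>b<length \<sigma>. (ys ! idx a < ys ! idx b \<longleftrightarrow> \<sigma> ! a < \<sigma> ! b)"
    unfolding contains_def by blast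
  show ?thesis unfolding contains_def
  proof (intro exI[of _ "\<lambda>a. idx a + length xs"] conjI allI impI)
    show "strict_mono_on {..<length \<sigma>} (\<lambda>a. idx a + length xs)"
      using sm unfolding strict_mono_on_def by auto
  qed (use lt c in \<open>auto simp: nth_append\<close>)
qed

lemma contains_length3:
  assumes "length \<sigma> = 3"
  shows "contains xs \<sigma> \<longleftrightarrow> (\<exists>i j k. i < j \<and> j < k \<and> k < length xs \<and>
           (\<forall>a<3. \<forall>b<3. xs ! ([i, j, k] ! a) < xs ! ([i, j, k] ! b) \<longleftrightarrow> \<sigma> ! a < \<sigma> ! b))"
proof
  assume "contains xs \<sigma>"
  then obtain idx where sm: "strict_mono_on {..<length \<sigma>} idx"
    and lt: "\<forall>a<length \<sigma>. idx a < length xs"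
    and c: "\<forall>a<length \<sigma>. \<forall>b<length \<sigma>. (xs ! idx a < xs ! idx b \<longleftrightarrow> \<sigma> ! a < \<sigma> ! b)"
    unfolding contains_def by blast
  have idx: "idx a = [idx 0, idx 1, idx 2] ! a" if "a < 3" for a
    using that by (auto simp: numeral_3_eq_3 numeral_2_eq_2 less_Suc_eq)
  show "\<exists>i j k. i < j \<and> j < k \<and> k < length xs \<and>
           (\<forall>a<3. \<forall>b<3. xs ! ([i, j, k] ! a) < xs ! ([i, j, k] ! b) \<longleftrightarrow> \<sigma> ! a < \<sigma> ! b)"
  proof (intro exI conjI)
    show "idx 0 < idx 1" "idx 1 < idx 2" using sm assms unfolding strict_mono_on_def by auto
    show "idx 2 < length xs" using lt assms by auto
  qed (use c assms idx in metis)
next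
  assume "\<exists>i j k. i < j \<and> j < k \<and> k < length xs \<and>
           (\<forall>a<3. \<forall>b<3. xs ! ([i, j, k] ! a) < xs ! ([i, j, k] ! b) \<longleftrightarrow> \<sigma> ! a < \<sigma> ! b)"
  then obtain i j k where ijk: "i < j" "j < k" "k < length xs"
    and c: "\<forall>a<3. \<forall>b<3. xs ! ([i, j, k] ! a) < xs ! ([i, j, k] ! b) \<longleftrightarrow> \<sigma> ! a < \<sigma> ! b"
    by blast
  show "contains xs \<sigma>" unfolding contains_def
  proof (intro exI[of _ "\<lambda>a. [i, j, k] ! a"] conjI allI impI)
    show "strict_mono_on {..<length \<sigma>} (\<lambda>a. [i, j, k] ! a)"
      unfolding strict_mono_on_def assms using ijk
      by (auto simp: numeral_3_eq_3 less_Suc_eq nth_Cons split: nat.splits)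
    show "[i, j, k] ! a < length xs" if "a < length \<sigma>" for a
      using that assms ijk by (auto simp: numeral_3_eq_3 less_Suc_eq)
  qed (use c assms in auto)
qed

lemma contains_132:
  "contains xs [1, 3, 2] \<longleftrightarrow>
     (\<exists>i j k. i < j \<and> j < k \<and> k < length xs \<and> xs ! i < xs ! k \<and> xs ! k < xs ! j)"
proof -
  have pattern: "(\<forall>a<3. \<forall>b<3. xs ! ([i, j, k] ! a) < xs ! ([i, j, k] ! b)
                    \<longleftrightarrow> [1, 3, 2::nat] ! a < [1, 3, 2] ! b) \<longleftrightarrow> xs ! i < xs ! k \<and> xs ! k < xs ! j"
    for i j k
    by (auto simp: numeral_3_eq_3 All_less_Suc)
  have "length [1, 3, 2::nat] = 3" by simp
  from contains_length3[OF this] show ?thesis by (simp only: pattern)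
qed


subsection \<open>Locality of r-sets\<close>

text \<open>Every entry lying (inclusively) between a member \<pi>_k of the r-set of \<pi>_i and \<pi>_i
  itself is at most \<pi>_i; so a larger entry blocks the r-set.\<close>
lemma r_pos_between:
  assumes "k \<in> r_pos xs i" "min k i \<le> j" "j \<le> max k i"
  shows "xs ! j \<le> xs ! i"
  using assms unfolding r_pos_def
  by (cases "j = k \<or> j = i") (auto simp: min_def max_def split: if_splits)

lemma r_pos_append_left:
  assumes "i < length xs"
  shows "r_pos (xs @ ys) i \<inter> {..<length xs} = r_pos xs i"
  using assms unfolding r_pos_def by (auto simp: nth_append min_def max_def split: if_splits)

lemma r_pos_append_right:
  assumes "q < length ys"
  shows "r_pos (xs @ ys) (length xs + q) \<inter> {length xs..} = (\<lambda>k. length xs + k) ` r_pos ys q"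
proof (intro set_eqI iffI)
  fix k assume k: "k \<in> r_pos (xs @ ys) (length xs + q) \<inter> {length xs..}"
  then obtain k' where k': "k = length xs + k'"
    using le_Suc_ex by auto
  have "k' \<in> r_pos ys q"
    unfolding r_pos_def
  proof (intro CollectI conjI allI impI)
    show "k' < length ys" "ys ! k' \<le> ys ! q"
      using k unfolding k' r_pos_def by (auto simp: nth_append)
    fix j assume "min k' q < j \<and> j < max k' q"
    then have "min k (length xs + q) < length xs + j \<and> length xs + j < max k (length xs + q)"
      unfolding k' by linarith
    then show "ys ! j \<le> ys ! q"
      using k unfolding r_pos_def by (auto simp: nth_append dest!: spec[of _ "length xs + j"])
  qed
  then show "k \<in> (\<lambda>k. length xs + k) ` r_pos ys q" using k' by blast
next
  fix k assume "k \<in> (\<lambda>k. length xs + k) ` r_pos ys q"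
  then obtain k' where k': "k = length xs + k'" "k' \<in> r_pos ys q" by blast
  have "k \<in> r_pos (xs @ ys) (length xs + q)"
    unfolding r_pos_def
  proof (intro CollectI conjI allI impI)
    show "k < length (xs @ ys)" "(xs @ ys) ! k \<le> (xs @ ys) ! (length xs + q)"
      using k' unfolding r_pos_def by (auto simp: nth_append)
    fix j assume j: "min k (length xs + q) < j \<and> j < max k (length xs + q)"
    then have "length xs \<le> j" unfolding k'(1) by linarith
    then obtain j' where j': "j = length xs + j'" using le_Suc_ex by blast
    with j have "min k' q < j' \<and> j' < max k' q" unfolding k'(1) by linarith
    then show "(xs @ ys) ! j \<le> (xs @ ys) ! (length xs + q)"
      using k'(2) unfolding r_pos_def j' by (auto simp: nth_append)
  qed
  then show "k \<in> r_pos (xs @ ys) (length xs + q) \<inter> {length xs..}" using k' by simp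
qed

lemma r_tilde_append_left:
  assumes i: "i < length xs" and ys: "ys \<noteq> []" and lt: "xs ! i < hd ys"
  shows "r_tilde (xs @ ys) i = r_tilde xs i"
proof -
  have "r_pos (xs @ ys) i \<subseteq> {..<length xs}"
  proof
    fix k assume k: "k \<in> r_pos (xs @ ys) i"
    show "k \<in> {..<length xs}"
    proof (rule ccontr)
      assume "k \<notin> {..<length xs}"
      then have "(xs @ ys) ! length xs \<le> (xs @ ys) ! i"
        using r_pos_between[OF k] i by simp
      then show False using ys lt i by (simp add: nth_append hd_conv_nth)
    qed
  qed
  then have "r_pos (xs @ ys) i = r_pos xs i" using r_pos_append_left[OF i] by blast
  moreover have "{j. j + length xs \<in> r_pos xs i} = {}" unfolding r_pos_def by auto
  ultimately show ?thesis unfolding r_tilde_def nths_append by simp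
qed

lemma r_tilde_append_right:
  assumes q: "q < length ys" and xs: "xs \<noteq> []" and lt: "ys ! q < last xs"
  shows "r_tilde (xs @ ys) (length xs + q) = r_tilde ys q"
proof -
  have "r_pos (xs @ ys) (length xs + q) \<subseteq> {length xs..}"
  proof
    fix k assume k: "k \<in> r_pos (xs @ ys) (length xs + q)"
    show "k \<in> {length xs..}"
    proof (rule ccontr)
      assume "k \<notin> {length xs..}"
      then have "(xs @ ys) ! (length xs - 1) \<le> (xs @ ys) ! (length xs + q)"
        using r_pos_between[OF k] by simp
      then show False using xs lt by (simp add: nth_append last_conv_nth)
    qed
  qed
  then have "r_pos (xs @ ys) (length xs + q) = (\<lambda>k. length xs + k) ` r_pos ys q"
    using r_pos_append_right[OF q] by blast
  moreover have "nths (xs @ ys) ((\<lambda>k. length xs + k) ` r_pos ys q) = nths ys (r_pos ys q)"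
    using nths_drop[of "length xs" "xs @ ys" "r_pos ys q"] by simp
  ultimately show ?thesis unfolding r_tilde_def by simp
qed

lemma r_tilde_max:
  assumes "i < length xs" "\<forall>x\<in>set xs. x \<le> xs ! i"
  shows "r_tilde xs i = standardize xs"
proof -
  have "r_pos xs i = {..<length xs}"
    using assms unfolding r_pos_def by (auto simp: max_def min_def)
  then show ?thesis unfolding r_tilde_def by simp
qed


subsection \<open>Splitting at the maximum\<close>

lemma all_less_length_split:
  "(\<forall>i<length (a @ n # b). Q i) \<longleftrightarrow>
     (\<forall>i<length a. Q i) \<and> Q (length a) \<and> (\<forall>q<length b. Q (length a + 1 + q))"
proof (intro iffI allI impI conjI)
  fix i assume A: "(\<forall>i<length a. Q i) \<and> Q (length a) \<and> (\<forall>q<length b. Q (length a + 1 + q))"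
    and i: "i < length (a @ n # b)"
  consider "i < length a" | "i = length a" | "length a < i" by linarith
  then show "Q i"
  proof cases
    case 3
    then obtain q where "i = length a + 1 + q" using le_Suc_ex[of "Suc (length a)" i] by auto
    then show ?thesis using A i by auto
  qed (use A in auto)
qed auto

text \<open>Goodness splits at the maximum: the parts must be good, and the r-set of the maximum,
  which is the whole permutation, must contain 231.\<close>
lemma good_split_at_max:
  assumes an: "\<forall>x\<in>set a. x < n" and bn: "\<forall>x\<in>set b. x < n"
  shows "good (a @ n # b) \<longleftrightarrow>
           good a \<and> good b \<and> (1 < length (a @ n # b) \<longrightarrow> contains (a @ n # b) [2, 3, 1])"
proof -
  define \<pi> where "\<pi> = a @ n # b"
  define P where "P t \<longleftrightarrow> (1 < length t \<longrightarrow> contains t [2, 3, 1])" for t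
  have good_P: "good xs \<longleftrightarrow> (\<forall>i<length xs. P (r_tilde xs i))" for xs
    unfolding good_def P_def by blast
  have left: "r_tilde \<pi> i = r_tilde a i" if "i < length a" for i
    unfolding \<pi>_def by (rule r_tilde_append_left) (use that an in \<open>auto\<close>)
  have max: "r_tilde \<pi> (length a) = standardize \<pi>"
    unfolding \<pi>_def by (rule r_tilde_max) (use an bn in \<open>auto simp: nth_append less_imp_le\<close>)
  have right: "r_tilde \<pi> (length a + 1 + q) = r_tilde b q" if "q < length b" for q
  proof -
    have "r_tilde ((a @ [n]) @ b) (length (a @ [n]) + q) = r_tilde b q"
      by (rule r_tilde_append_right) (use that bn in \<open>auto\<close>)
    then show ?thesis unfolding \<pi>_def by simp
  qed
  have "P (standardize \<pi>) \<longleftrightarrow> (1 < length \<pi> \<longrightarrow> contains \<pi> [2, 3, 1])"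
    unfolding P_def contains_standardize by (simp add: standardize_def)
  then show ?thesis
    unfolding good_P \<pi>_def[symmetric] unfolding \<pi>_def all_less_length_split
    unfolding \<pi>_def[symmetric] using left max right by auto
qed

lemma contains_132_split_at_max:
  assumes an: "\<forall>x\<in>set a. x < n" and bn: "\<forall>x\<in>set b. x < n"
    and ab: "\<forall>x\<in>set a. \<forall>y\<in>set b. y < x"
  shows "contains (a @ n # b) [1, 3, 2] \<longleftrightarrow> contains a [1, 3, 2] \<or> contains b [1, 3, 2]"
proof
  assume "contains a [1, 3, 2] \<or> contains b [1, 3, 2]"
  then show "contains (a @ n # b) [1, 3, 2]"
    using contains_append_left[of a _ "n # b"] contains_append_right[of b _ "a @ [n]"] by auto
next
  define \<pi> where "\<pi> = a @ n # b"
  assume "contains (a @ n # b) [1, 3, 2]"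
  then obtain i j k where ijk: "i < j" "j < k" "k < length \<pi>"
    and v: "\<pi> ! i < \<pi> ! k" "\<pi> ! k < \<pi> ! j"
    unfolding contains_132 \<pi>_def by blast
  have in_a: "\<pi> ! p = a ! p" if "p < length a" for p
    using that unfolding \<pi>_def by (simp add: nth_append)
  have in_b: "\<pi> ! p = b ! (p - Suc (length a))" if "length a < p" for p
    using that unfolding \<pi>_def by (simp add: nth_append)
  have at_max: "\<pi> ! length a = n" unfolding \<pi>_def by simp
  have below_max: "\<pi> ! p < n" if "p < length \<pi>" "p \<noteq> length a" for p
    using that an bn in_a in_b unfolding \<pi>_def
    by (cases "p < length a") auto
  consider "k < length a" | "length a < i" | "i < length a" "length a < k"
    | "i = length a \<or> k = length a" by linarith
  then show "contains a [1, 3, 2] \<or> contains b [1, 3, 2]"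
  proof cases
    case 1
    then have "contains a [1, 3, 2]"
      unfolding contains_132 using ijk v in_a by (intro exI[of _ i] exI[of _ j] exI[of _ k]) auto
    then show ?thesis ..
  next
    case 2
    define d where "d = Suc (length a)"
    have "contains b [1, 3, 2]"
      unfolding contains_132 using ijk v in_b 2
      by (intro exI[of _ "i - d"] exI[of _ "j - d"] exI[of _ "k - d"])
        (auto simp: d_def \<pi>_def)
    then show ?thesis ..
  next
    case 3 \<comment> \<open>the "1" lies in a and the "2" in b, but b lies below a\<close>
    then have "\<pi> ! k < \<pi> ! i"
      using ab in_a in_b ijk unfolding \<pi>_def by auto
    then show ?thesis using v by simp
  next
    case 4 \<comment> \<open>the "1" or the "2" would be the maximum, which exceeds the "3"\<close>
    then have "\<pi> ! j < n" using below_max[of j] ijk by auto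
    then show ?thesis using 4 at_max v by auto
  qed
qed


definition good_perms :: "nat \<Rightarrow> nat list set" where
  "good_perms n = {\<pi>. is_perm n \<pi> \<and> \<not> contains \<pi> [1, 3, 2] \<and> good \<pi>}"

definition glue :: "nat \<Rightarrow> nat \<Rightarrow> nat list \<Rightarrow> nat list \<Rightarrow> nat list" where
  "glue n k a b = map (\<lambda>x. x + (n - 1 - k)) a @ n # b"

definition glue_pairs :: "nat \<Rightarrow> nat \<Rightarrow> (nat list \<times> nat list) set" where
  "glue_pairs n k = {(a, b). a \<in> good_perms k \<and> b \<in> good_perms (n - 1 - k) \<and>
                              (2 \<le> n \<longrightarrow> contains (glue n k a b) [2, 3, 1])}"

lemma set_shift_perm:
  assumes "is_perm m a"
  shows "set (map (\<lambda>x. x + t) a) = {t + 1..t + m}"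
proof -
  have "set (map (\<lambda>x. x + t) a) = (\<lambda>x. x + t) ` {1..m}" using assms unfolding is_perm_def by simp
  also have "\<dots> = {1 + t..m + t}" by (rule image_add_atLeastAtMost')
  finally show ?thesis by (simp add: add.commute)
qed

lemma unshift_perm:
  assumes vals: "set a' = {t + 1..t + m}" and dist: "distinct a'" and len: "length a' = m"
  shows "is_perm m (map (\<lambda>x. x - t) a')" and "a' = map (\<lambda>x. x + t) (map (\<lambda>x. x - t) a')"
proof -
  define a where "a = map (\<lambda>x. x - t) a'"
  show shift: "a' = map (\<lambda>x. x + t) (map (\<lambda>x. x - t) a')"
    unfolding map_map o_def by (rule map_idI[symmetric]) (use vals in auto)
  have "(\<lambda>x. x + t) ` set a = (\<lambda>x. x + t) ` {1..m}"
  proof -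
    have "(\<lambda>x. x + t) ` set a = set a'" using shift unfolding a_def by (metis set_map)
    also have "\<dots> = (\<lambda>x. x + t) ` {1..m}" using vals by (simp add: add.commute)
    finally show ?thesis .
  qed
  moreover have "inj (\<lambda>x::nat. x + t)" by (simp add: inj_on_def)
  ultimately have "set a = {1..m}" by (simp only: inj_image_eq_iff)
  moreover have "distinct a" using dist shift unfolding a_def by (metis distinct_map)
  ultimately show "is_perm m (map (\<lambda>x. x - t) a')"
    using len unfolding a_def is_perm_def by simp
qed

lemma lower_upper_partition:
  fixes A B :: "nat set"
  assumes union: "A \<union> B = {1..N}" and disj: "A \<inter> B = {}" and above: "\<forall>x\<in>A. \<forall>y\<in>B. y < x"
  shows "B = {1..card B}" and "A = {card B + 1..N}"
proof -
  define c where "c = card B"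
  have "B \<subseteq> {1..N}" using union by blast
  then have fin: "finite B" by (rule finite_subset) simp
  have "B \<subseteq> {1..c}"
  proof
    fix y assume y: "y \<in> B"
    have yN: "y \<in> {1..N}" using union y by blast
    have "{1..y} \<subseteq> B"
    proof
      fix z assume z: "z \<in> {1..y}"
      have "z \<in> A \<union> B" unfolding union using yN z by simp
      moreover have "z \<notin> A"
      proof
        assume "z \<in> A"
        then have "y < z" using above y by blast
        with z show False by simp
      qed
      ultimately show "z \<in> B" by blast
    qed
    then have "card {1..y} \<le> c" unfolding c_def by (rule card_mono[OF fin])
    then show "y \<in> {1..c}" using yN by simp
  qed
  then have B: "B = {1..c}" using fin by (intro card_subset_eq) (auto simp: c_def)
  then show "B = {1..card B}" by (simp add: c_def)
  have "A = {1..N} - B" using union disj by blast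
  also have "\<dots> = {c + 1..N}" unfolding B by auto
  finally show "A = {card B + 1..N}" by (simp add: c_def)
qed

lemma avoid_132_left_above_right:
  assumes "\<not> contains (a @ n # b) [1, 3, 2]" "x \<in> set a" "y \<in> set b" "y < n"
  shows "\<not> x < y"
proof
  assume xy: "x < y"
  obtain p where p: "p < length a" "a ! p = x" using assms(2) by (auto simp: in_set_conv_nth)
  obtain q where q: "q < length b" "b ! q = y" using assms(3) by (auto simp: in_set_conv_nth)
  have "contains (a @ n # b) [1, 3, 2]"
    unfolding contains_132 using p q xy assms(4)
    by (intro exI[of _ p] exI[of _ "length a"] exI[of _ "length a + 1 + q"]) (auto simp: nth_append)
  with assms(1) show False by simp
qed

lemma avoider_is_glue:
  assumes perm: "is_perm n \<pi>" and avoid: "\<not> contains \<pi> [1, 3, 2]" and n: "1 \<le> n"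
  obtains k a b where "k < n" "is_perm k a" "is_perm (n - 1 - k) b" "\<pi> = glue n k a b"
proof -
  have "n \<in> set \<pi>" using perm n unfolding is_perm_def by auto
  then obtain a' b where \<pi>: "\<pi> = a' @ n # b" by (meson split_list)
  define k where "k = length a'"
  have dist: "distinct (a' @ n # b)" and len: "length (a' @ n # b) = n"
    and vals: "set (a' @ n # b) = {1..n}" using perm unfolding \<pi> is_perm_def by auto
  have "set a' \<union> set b = set (a' @ n # b) - {n}" using dist by auto
  also have "\<dots> = {1..n} - {n}" by (simp only: vals)
  also have "\<dots> = {1..n - 1}" using n by auto
  finally have parts: "set a' \<union> set b = {1..n - 1}" "set a' \<inter> set b = {}"
    using dist by auto
  have above: "\<forall>x\<in>set a'. \<forall>y\<in>set b. y < x"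
  proof (intro ballI)
    fix x y assume x: "x \<in> set a'" and y: "y \<in> set b"
    have "y \<in> {1..n - 1}" using y parts(1) by blast
    then have "y < n" by auto
    then have "\<not> x < y" using avoid_132_left_above_right[OF avoid[unfolded \<pi>] x y] by blast
    moreover have "x \<noteq> y" using x y parts(2) by blast
    ultimately show "y < x" by simp
  qed
  have "k < n" and len_b: "length b = n - 1 - k" using len unfolding k_def by simp_all
  have card_b: "card (set b) = n - 1 - k" using dist len_b by (simp add: distinct_card)
  have b_vals: "set b = {1..n - 1 - k}"
    using lower_upper_partition(1)[OF parts above] card_b by simp
  have "(n - 1 - k) + k = n - 1" using \<open>k < n\<close> by simp
  then have a'_vals: "set a' = {(n - 1 - k) + 1..(n - 1 - k) + k}"
    using lower_upper_partition(2)[OF parts above] card_b by simp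
  define a where "a = map (\<lambda>x. x - (n - 1 - k)) a'"
  have "is_perm k a" "a' = map (\<lambda>x. x + (n - 1 - k)) a"
    using unshift_perm[OF a'_vals _ k_def[symmetric]] dist unfolding a_def by auto
  moreover have "is_perm (n - 1 - k) b" using dist b_vals len_b unfolding is_perm_def by simp
  moreover note \<open>k < n\<close>
  ultimately show thesis using that \<pi> unfolding glue_def by blast
qed

lemma glue_in_good_perms_iff:
  assumes k: "k < n" and a: "is_perm k a" and b: "is_perm (n - 1 - k) b"
  shows "glue n k a b \<in> good_perms n \<longleftrightarrow> (a, b) \<in> glue_pairs n k"
proof -
  define t where "t = n - 1 - k"
  define a' where "a' = map (\<lambda>x. x + t) a"
  have a'_vals: "set a' = {t + 1..n - 1}"
    using set_shift_perm[OF a, of t] k unfolding a'_def t_def by simp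
  have b_vals: "set b = {1..t}" using b unfolding is_perm_def t_def by simp
  have an: "\<forall>x\<in>set a'. x < n" and bn: "\<forall>x\<in>set b. x < n"
    and ab: "\<forall>x\<in>set a'. \<forall>y\<in>set b. y < x"
    using a'_vals b_vals k unfolding t_def by auto
  have glue: "glue n k a b = a' @ n # b" unfolding glue_def a'_def t_def ..
  have perm: "is_perm n (a' @ n # b)"
  proof -
    have "length (a' @ n # b) = n" using a b k unfolding is_perm_def a'_def t_def by auto
    moreover have "distinct a'" using a unfolding a'_def is_perm_def by (simp add: distinct_map inj_on_def)
    then have "distinct (a' @ n # b)" using b an bn ab unfolding is_perm_def by fastforce
    moreover have "set (a' @ n # b) = {1..n}" using a'_vals b_vals k unfolding t_def by auto
    ultimately show ?thesis unfolding is_perm_def by blast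
  qed
  have "contains a' [1, 3, 2] \<longleftrightarrow> contains a [1, 3, 2]"
    unfolding a'_def by (rule contains_map[OF order_iso_on_shift])
  then have "contains (a' @ n # b) [1, 3, 2] \<longleftrightarrow> contains a [1, 3, 2] \<or> contains b [1, 3, 2]"
    using contains_132_split_at_max[OF an bn ab] by simp
  moreover have "good (a' @ n # b) \<longleftrightarrow>
               good a \<and> good b \<and> (2 \<le> n \<longrightarrow> contains (a' @ n # b) [2, 3, 1])"
  proof -
    have "good a' \<longleftrightarrow> good a" unfolding a'_def by (rule good_map[OF order_iso_on_shift])
    moreover have "1 < length (a' @ n # b) \<longleftrightarrow> 2 \<le> n" using perm unfolding is_perm_def by linarith
    ultimately show ?thesis using good_split_at_max[OF an bn] by simp
  qed
  ultimately show ?thesis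
    using perm a b unfolding good_perms_def glue_pairs_def t_def[symmetric] by (auto simp: glue)
qed

lemma glue_pairs_perms: "(a, b) \<in> glue_pairs n k \<Longrightarrow> is_perm k a \<and> is_perm (n - 1 - k) b"
  unfolding glue_pairs_def good_perms_def by auto

lemma glue_nth_max: "length a = k \<Longrightarrow> glue n k a b ! k = n"
  unfolding glue_def by (simp add: nth_append)

text \<open>A glued permutation determines the position of its maximum, hence both parts.\<close>
lemma glue_determines_parts:
  assumes perm: "is_perm n (glue n k a b)" and a: "is_perm k a" and c: "is_perm j c"
    and eq: "glue n k a b = glue n j c d"
  shows "k = j \<and> a = c \<and> b = d"
proof -
  define \<pi> where "\<pi> = glue n k a b"
  have "distinct \<pi>" "length \<pi> = n" using perm unfolding \<pi>_def is_perm_def by auto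
  moreover have "\<pi> ! k = n" using a unfolding \<pi>_def is_perm_def by (simp add: glue_nth_max)
  moreover have "\<pi> ! j = n" using c unfolding \<pi>_def eq is_perm_def by (simp add: glue_nth_max)
  moreover have "k < length (glue n k a b)" "j < length (glue n j c d)"
    using a c unfolding glue_def is_perm_def by simp_all
  then have "k < length \<pi>" "j < length \<pi>" unfolding \<pi>_def eq by simp_all
  ultimately have kj: "k = j" using nth_eq_iff_index_eq by metis
  have "map (\<lambda>x. x + (n - 1 - k)) a = map (\<lambda>x. x + (n - 1 - k)) c \<and> b = d"
    using eq a c unfolding kj glue_def is_perm_def by simp
  moreover have "inj (\<lambda>x::nat. x + (n - 1 - k))" by (simp add: inj_on_def)
  ultimately show ?thesis using kj by simp
qed

lemma glue_bij:
  assumes n: "1 \<le> n"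
  shows "bij_betw (\<lambda>(k, a, b). glue n k a b) (SIGMA k:{..<n}. glue_pairs n k) (good_perms n)"
proof (rule bij_betwI')
  fix x assume "x \<in> (SIGMA k:{..<n}. glue_pairs n k)"
  then show "(\<lambda>(k, a, b). glue n k a b) x \<in> good_perms n"
    using glue_in_good_perms_iff glue_pairs_perms by auto
next
  fix x y assume x: "x \<in> (SIGMA k:{..<n}. glue_pairs n k)" and y: "y \<in> (SIGMA k:{..<n}. glue_pairs n k)"
  obtain k a b j c d where xy: "x = (k, a, b)" "y = (j, c, d)" by (cases x, cases y) auto
  have k: "k < n" "is_perm k a" "is_perm (n - 1 - k) b" and j: "is_perm j c"
    and in_k: "glue n k a b \<in> good_perms n"
    using x y glue_pairs_perms glue_in_good_perms_iff unfolding xy by auto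
  show "(\<lambda>(k, a, b). glue n k a b) x = (\<lambda>(k, a, b). glue n k a b) y \<longleftrightarrow> x = y"
    using glue_determines_parts[OF _ k(2) j] in_k unfolding xy good_perms_def by auto
next
  fix \<pi> assume "\<pi> \<in> good_perms n"
  then have \<pi>: "is_perm n \<pi>" "\<not> contains \<pi> [1, 3, 2]" unfolding good_perms_def by auto
  obtain k a b where k: "k < n" "is_perm k a" "is_perm (n - 1 - k) b" and glue: "\<pi> = glue n k a b"
    using avoider_is_glue[OF \<pi> n] .
  have "(k, a, b) \<in> (SIGMA k:{..<n}. glue_pairs n k)"
    using \<open>\<pi> \<in> good_perms n\<close> glue_in_good_perms_iff[OF k] k(1) unfolding glue by simp
  with glue show "\<exists>x\<in>SIGMA k:{..<n}. glue_pairs n k. \<pi> = (\<lambda>(k, a, b). glue n k a b) x"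
    by force
qed

lemma finite_good_perms: "finite (good_perms k)"
proof (rule finite_subset)
  show "good_perms k \<subseteq> {xs. set xs \<subseteq> {1..k} \<and> length xs = k}"
    unfolding good_perms_def is_perm_def by auto
  show "finite {xs. set xs \<subseteq> {1..k} \<and> length xs = k}" by (rule finite_lists_length_eq) simp
qed

lemma card_good_perms_sum:
  assumes "1 \<le> n"
  shows "card (good_perms n) = (\<Sum>k<n. card (glue_pairs n k))"
proof -
  have fin: "finite (glue_pairs n k)" for k
    by (rule finite_subset[of _ "good_perms k \<times> good_perms (n - 1 - k)"])
      (auto simp: glue_pairs_def finite_good_perms)
  have "card (good_perms n) = card (SIGMA k:{..<n}. glue_pairs n k)"
    by (rule bij_betw_same_card[OF glue_bij[OF assms], symmetric])
  also have "\<dots> = (\<Sum>k<n. card (glue_pairs n k))"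
    by (rule card_SigmaI) (simp_all add: fin)
  finally show ?thesis .
qed


subsection \<open>The recursion\<close>

lemma good_perms_0: "good_perms 0 = {[]}"
  unfolding good_perms_def is_perm_def good_def contains_def by auto

lemma is_perm_1: "is_perm 1 a \<Longrightarrow> a = [1]"
  unfolding is_perm_def by (cases a) auto

text \<open>A good permutation of length at least 2 contains 231: its maximum's r-set is all of it.\<close>
lemma good_perm_contains_231:
  assumes "\<pi> \<in> good_perms k" "2 \<le> k"
  shows "contains \<pi> [2, 3, 1]"
proof -
  have perm: "is_perm k \<pi>" and good: "good \<pi>" using assms(1) unfolding good_perms_def by auto
  have "k \<in> set \<pi>" using perm assms(2) unfolding is_perm_def by auto
  then obtain m where m: "m < length \<pi>" "\<pi> ! m = k" by (auto simp: in_set_conv_nth)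
  have "\<forall>x\<in>set \<pi>. x \<le> \<pi> ! m" using perm m unfolding is_perm_def by auto
  then have "r_tilde \<pi> m = standardize \<pi>" by (rule r_tilde_max[OF m(1)])
  moreover have "length (standardize \<pi>) = k" using perm unfolding standardize_def is_perm_def by simp
  ultimately have "contains (standardize \<pi>) [2, 3, 1]" using good m assms(2) unfolding good_def by auto
  then show ?thesis by (simp add: contains_standardize)
qed

lemma glue_pairs_ge_3:
  assumes n: "3 \<le> n" and k: "k < n"
  shows "glue_pairs n k = good_perms k \<times> good_perms (n - 1 - k)"
proof -
  have "contains (glue n k a b) [2, 3, 1]" if a: "a \<in> good_perms k" and b: "b \<in> good_perms (n - 1 - k)" for a b
  proof -
    consider "2 \<le> k" | "2 \<le> n - 1 - k" | "k = 1" "n = 3" using n k by linarith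
    then show ?thesis
    proof cases
      case 1
      have "contains (map (\<lambda>x. x + (n - 1 - k)) a) [2, 3, 1]"
        using good_perm_contains_231[OF a 1] contains_map[OF order_iso_on_shift] by simp
      then show ?thesis unfolding glue_def by (rule contains_append_left)
    next
      case 2
      have "contains ((map (\<lambda>x. x + (n - 1 - k)) a @ [n]) @ b) [2, 3, 1]"
        using good_perm_contains_231[OF b 2] by (rule contains_append_right)
      then show ?thesis unfolding glue_def by simp
    next
      case 3
      then have "a = [1]" "b = [1]" using a b is_perm_1 unfolding good_perms_def by auto
      then have "glue n k a b = [2, 3, 1]" using 3 by (simp add: glue_def)
      moreover have "contains [2, 3, 1] [2, 3, 1]"
        unfolding contains_def by (intro exI[of _ id]) (auto simp: strict_mono_on_def)
      ultimately show ?thesis by simp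
    qed
  qed
  then show ?thesis unfolding glue_pairs_def by auto
qed

lemma glue_pairs_2: "k < 2 \<Longrightarrow> glue_pairs 2 k = {}"
proof -
  assume k: "k < 2"
  have "\<not> contains (glue 2 k a b) [2, 3, 1]" if "a \<in> good_perms k" "b \<in> good_perms (2 - 1 - k)" for a b
  proof
    assume "contains (glue 2 k a b) [2, 3, 1]"
    then have "3 \<le> length (glue 2 k a b)" using contains_length by fastforce
    moreover have "length (glue 2 k a b) \<le> 2"
      using that k unfolding glue_def good_perms_def is_perm_def by auto
    ultimately show False by simp
  qed
  then show ?thesis unfolding glue_pairs_def by auto
qed

lemma card_good_perms_1: "card (good_perms 1) = 1"
proof -
  have "glue_pairs 1 0 = good_perms 0 \<times> good_perms 0" unfolding glue_pairs_def by auto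
  then show ?thesis using card_good_perms_sum[of 1] by (simp add: good_perms_0)
qed

lemma card_good_perms_2: "card (good_perms 2) = 0"
proof -
  have "{..<2::nat} = {0, 1}" by auto
  then show ?thesis using card_good_perms_sum[of 2] by (simp add: glue_pairs_2)
qed

lemma card_good_perms_rec:
  "3 \<le> n \<Longrightarrow> card (good_perms n) = (\<Sum>k<n. card (good_perms k) * card (good_perms (n - 1 - k)))"
  using card_good_perms_sum[of n] by (simp add: glue_pairs_ge_3 card_cartesian_product)


subsection \<open>The generating function\<close>

unbundle fps_syntax

lemma fps_quadratic_of_recursion:
  fixes f :: "nat \<Rightarrow> nat"
  assumes f0: "f 0 = 1" and f1: "f 1 = 1" and f2: "f 2 = 0"
    and rec: "\<And>n. n \<ge> 3 \<Longrightarrow> f n = (\<Sum>k<n. f k * f (n - 1 - k))"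
  defines "A \<equiv> Abs_fps (\<lambda>n. real (f n))"
  shows "fps_X * A^2 = A - 1 + 2 * fps_X^2"
proof (rule fps_ext)
  have An: "A $ k = real (f k)" for k by (simp add: A_def)
  have sq: "(A^2) $ m = (\<Sum>k<Suc m. real (f k) * real (f (m - k)))" for m
    by (simp add: power2_eq_square fps_mult_nth An atLeast0AtMost lessThan_Suc_atMost)
  fix n :: nat
  consider "n = 0" | "n = 1" | "n = 2" | "n \<ge> 3" by linarith
  then show "(fps_X * A^2) $ n = (A - 1 + 2 * fps_X^2) $ n"
  proof cases
    case 1 then show ?thesis by (simp add: An f0)
  next
    case 2 then show ?thesis using f1 by (simp add: An f0 sq fps_X_power_iff)
  next
    case 3
    have "(2 * fps_X^2 :: real fps) $ 2 = 2" by (simp add: fps_X_power_iff numeral_fps_const)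
    moreover have "(A^2) $ 1 = 2" using f0 f1 by (simp add: sq An)
    ultimately show ?thesis using 3 f2 by (simp add: An)
  next
    case 4
    then obtain m where m: "n = Suc m" by (cases n) auto
    have "real (f n) = (\<Sum>k<n. real (f k) * real (f (n - 1 - k)))"
      using rec[OF 4] by (simp flip: of_nat_mult)
    moreover have "(2 * fps_X^2 :: real fps) $ n = 0"
      using 4 by (simp add: fps_X_power_iff numeral_fps_const)
    moreover have "(fps_X * A^2) $ n = (A^2) $ m" by (simp add: m)
    ultimately show ?thesis using 4 by (simp only: sq An m fps_add_nth fps_sub_nth) (simp add: m)
  qed
qed

text \<open>Solving the quadratic: 1 - 2xA is the square root of 1 - 4x + 8x^3 with constant
  term 1, so the series defining gf6 equals A - 1.\<close>
lemma gf6_eq: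
  fixes A :: "real fps"
  assumes quad: "fps_X * A^2 = A - 1 + 2 * fps_X^2" and A0: "A $ 0 = 1"
  shows "gf6 = A - 1"
proof -
  define P :: "real fps" where "P = 1 - 4 * fps_X + 8 * fps_X ^ 3"
  define R :: "real fps" where "R = 1 - 2 * fps_X * A"
  have "R^2 = 1 - 4 * fps_X * A + 4 * fps_X * (fps_X * A^2)"
    unfolding R_def by (simp add: power2_eq_square algebra_simps)
  also have "\<dots> = P" unfolding quad P_def by (simp add: power2_eq_square power3_eq_cube algebra_simps)
  finally have "R ^ Suc 1 = P" by (simp add: numeral_2_eq_2)
  moreover have "P $ 0 = 1" "R $ 0 = 1" by (simp_all add: P_def R_def)
  ultimately have "fps_radical (\<lambda>k x. root k x) 2 P = R"
    using radical_unique[of "\<lambda>k x. root k x" 1 P R] by (simp add: numeral_2_eq_2)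
  then have "gf6 = (1 - 2 * fps_X - R) / (2 * fps_X)" unfolding gf6_def P_def by (simp only:)
  also have "1 - 2 * fps_X - R = (2 * fps_X) * (A - 1)" unfolding R_def by (simp add: algebra_simps)
  also have "(2 * fps_X) * (A - 1) / (2 * fps_X) = A - 1"
    by (rule nonzero_mult_div_cancel_left) simp
  finally show ?thesis .
qed


theorem corollary6:
  fixes n :: nat
  assumes "n \<ge> 1"
  shows "real (card {\<pi> \<in> Av n [1, 3, 2].
            \<forall>i<n. length (r_tilde \<pi> i) > 1 \<longrightarrow> contains (r_tilde \<pi> i) [2, 3, 1]})
         = fps_nth gf6 n"
proof -
  define A where "A = Abs_fps (\<lambda>n. real (card (good_perms n)))"
  have "fps_X * A^2 = A - 1 + 2 * fps_X^2"
    unfolding A_def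
    by (rule fps_quadratic_of_recursion[of "\<lambda>n. card (good_perms n)",
          OF _ card_good_perms_1 card_good_perms_2 card_good_perms_rec]) (simp add: good_perms_0)
  then have "gf6 = A - 1" by (rule gf6_eq) (simp add: A_def good_perms_0)
  then have "gf6 $ n = (A - 1) $ n" by simp
  also have "\<dots> = real (card (good_perms n))" using assms by (simp add: A_def)
  finally have coeff: "real (card (good_perms n)) = gf6 $ n" ..
  have "{\<pi> \<in> Av n [1, 3, 2]. \<forall>i<n. length (r_tilde \<pi> i) > 1 \<longrightarrow> contains (r_tilde \<pi> i) [2, 3, 1]}
          = good_perms n"
    unfolding Av_def good_perms_def good_def is_perm_def by auto
  with coeff show ?thesis by simp
qed

end
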